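(* Let $X\in\{0,1\}$ be binary with $\Pr(X=0)>0$ and $\Pr(X=1)>0$, and let $Y_x$ be a real random variable such that for each $x'\in\{0,1\}$ the conditional cdf of $Y_x$ given $X=x'$ is strictly increasing and continuous on its support. Let $\underline{y}_x<\overline{y}_x$ denote the (possibly infinite) endpoints of the support of $Y_x$. Let $\mathcal{T}\subseteq\mathbb{R}$ and suppose $[\underline{y}_x,\overline{y}_x]\setminus\mathcal{T}$ contains a non-degenerate interval. Then there exists a latent propensity score $p:[\underline{y}_x,\overline{y}_x]\to[0,1]$ (i.e., a function such that the joint distribution of $(Y_x,X)$ with the given marginal distribution of $Y_x$ and with $\Pr(X=1\mid Y_x=y_x)=p(y_x)$ has $\Pr(X=1)$ equal to the given value) which is consistent with $\mathcal{T}$-independence of $Y_x$ from $X$, and for which the sets \[ \{y_x\in[\underline{y}_x,\overline{y}_x] : p(y_x)=0\} \quad\text{and}\quad \{y_x\in[\underline{y}_x,\overline{y}_x]: p(y_x)=1\} \] both have positive Lebesgue measure.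
   Context: $Y_x$ is $\mathcal{T}$-independent of $X$ if $F_{Y_x\mid X}(\tau\mid 0)=F_{Y_x\mid X}(\tau\mid 1)$ for all $\tau\in\mathcal{T}$, where $F_{Y_x\mid X}(\cdot\mid x')$ is the conditional cdf of $Y_x$ given $X=x'$. The latent propensity score is $p(y_x)=\Pr(X=1\mid Y_x=y_x)$. *)

theory Defs
  imports "HOL-Probability.Probability"
begin

definition marg_cdf :: "'a measure \<Rightarrow> ('a \<Rightarrow> real) \<Rightarrow> real \<Rightarrow> real" where
  "marg_cdf M Y t = measure M {\<omega>\<in>space M. Y \<omega> \<le> t}"

definition cond_cdf :: "'a measure \<Rightarrow> ('a \<Rightarrow> real) \<Rightarrow> ('a \<Rightarrow> nat) \<Rightarrow> nat \<Rightarrow> real \<Rightarrow> real" where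
  "cond_cdf M Y X x' t =
     measure M {\<omega>\<in>space M. Y \<omega> \<le> t \<and> X \<omega> = x'} / measure M {\<omega>\<in>space M. X \<omega> = x'}"

definition supp_lo :: "'a measure \<Rightarrow> ('a \<Rightarrow> real) \<Rightarrow> ereal" where
  "supp_lo M Y = Inf (ereal ` {t. marg_cdf M Y t > 0})"

definition supp_hi :: "'a measure \<Rightarrow> ('a \<Rightarrow> real) \<Rightarrow> ereal" where
  "supp_hi M Y = Sup (ereal ` {t. marg_cdf M Y t < 1})"

definition supp_set :: "'a measure \<Rightarrow> ('a \<Rightarrow> real) \<Rightarrow> real set" where
  "supp_set M Y = {t. supp_lo M Y \<le> ereal t \<and> ereal t \<le> supp_hi M Y}"

text \<open>Conditional cdfs of Y given X=1 and X=0 in the joint distribution generated by the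
  marginal of Y and the latent propensity score p, with Pr(X=1) = q.\<close>
definition latent_cdf1 :: "'a measure \<Rightarrow> ('a \<Rightarrow> real) \<Rightarrow> (real \<Rightarrow> real) \<Rightarrow> real \<Rightarrow> real \<Rightarrow> real" where
  "latent_cdf1 M Y p q t = (\<integral>\<omega>. p (Y \<omega>) * indicator {..t} (Y \<omega>) \<partial>M) / q"

definition latent_cdf0 :: "'a measure \<Rightarrow> ('a \<Rightarrow> real) \<Rightarrow> (real \<Rightarrow> real) \<Rightarrow> real \<Rightarrow> real \<Rightarrow> real" where
  "latent_cdf0 M Y p q t = (\<integral>\<omega>. (1 - p (Y \<omega>)) * indicator {..t} (Y \<omega>) \<partial>M) / (1 - q)"

definition is_latent_pscore :: "'a measure \<Rightarrow> ('a \<Rightarrow> real) \<Rightarrow> real \<Rightarrow> (real \<Rightarrow> real) \<Rightarrow> bool" where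
  "is_latent_pscore M Y q p \<longleftrightarrow>
     p \<in> borel_measurable borel \<and>
     (\<forall>y\<in>supp_set M Y. 0 \<le> p y \<and> p y \<le> 1) \<and>
     (\<integral>\<omega>. p (Y \<omega>) \<partial>M) = q"

definition latent_T_indep :: "'a measure \<Rightarrow> ('a \<Rightarrow> real) \<Rightarrow> real \<Rightarrow> (real \<Rightarrow> real) \<Rightarrow> real set \<Rightarrow> bool" where
  "latent_T_indep M Y q p T \<longleftrightarrow> (\<forall>\<tau>\<in>T. latent_cdf0 M Y p q \<tau> = latent_cdf1 M Y p q \<tau>)"

end

(*
  Pick a nondegenerate interval (c, d) in the support that avoids T, and let q = Pr(X = 1).
  Outside (c, d] keep p = q; inside, put p = 1 on (c, m] and p = 0 on (m, d], where m is
  chosen by the intermediate value theorem (the cdf F of Y is continuous, being a mixture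
  of the continuous conditional cdfs) so that Pr(c < Y \<le> m) = q Pr(c < Y \<le> d).
  This only moves mass of p(Y) inside (c, d], so E[p(Y); Y \<le> \<tau>] = q F(\<tau>) for every
  \<tau> outside (c, d), and both latent conditional cdfs equal F there, in particular on T.
*)
theory Submission
  imports Defs
begin

lemma measure_eq_mult_cond_cdf:
  fixes X :: "'a \<Rightarrow> nat"
  assumes "finite_measure M" "Y \<in> borel_measurable M" "X \<in> measurable M (count_space UNIV)"
  shows "measure M {\<omega>\<in>space M. Y \<omega> \<le> t \<and> X \<omega> = x'}
       = measure M {\<omega>\<in>space M. X \<omega> = x'} * cond_cdf M Y X x' t"
proof (cases "measure M {\<omega>\<in>space M. X \<omega> = x'} = 0")
  \<comment> \<open>here \<open>cond_cdf\<close> is the junk value \<open>0 / 0 = 0\<close>, and the left-hand side vanishes too\<close>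
  case True
  have "measure M {\<omega>\<in>space M. Y \<omega> \<le> t \<and> X \<omega> = x'} \<le> measure M {\<omega>\<in>space M. X \<omega> = x'}"
    using assms by (intro finite_measure.finite_measure_mono) auto
  then show ?thesis using True by (simp add: measure_le_0_iff)
next
  case False
  then show ?thesis by (simp add: cond_cdf_def)
qed

lemma marg_cdf_binary_mixture:
  fixes X :: "'a \<Rightarrow> nat"
  assumes "finite_measure M" "Y \<in> borel_measurable M" "X \<in> measurable M (count_space UNIV)"
    and "\<forall>\<omega>\<in>space M. X \<omega> \<in> {0, 1}"
  shows "marg_cdf M Y t = measure M {\<omega>\<in>space M. X \<omega> = 0} * cond_cdf M Y X 0 t
                        + measure M {\<omega>\<in>space M. X \<omega> = 1} * cond_cdf M Y X 1 t"
proof -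
  have "{\<omega>\<in>space M. Y \<omega> \<le> t}
      = {\<omega>\<in>space M. Y \<omega> \<le> t \<and> X \<omega> = 0} \<union> {\<omega>\<in>space M. Y \<omega> \<le> t \<and> X \<omega> = 1}"
    using assms(4) by auto
  then have "marg_cdf M Y t = measure M {\<omega>\<in>space M. Y \<omega> \<le> t \<and> X \<omega> = 0}
                            + measure M {\<omega>\<in>space M. Y \<omega> \<le> t \<and> X \<omega> = 1}"
    unfolding marg_cdf_def using assms(1-3)
    by (simp only:) (intro finite_measure.finite_measure_Union, auto)
  then show ?thesis using measure_eq_mult_cond_cdf[OF assms(1-3)] by simp
qed

lemma continuous_marg_cdf_binary:
  fixes X :: "'a \<Rightarrow> nat"
  assumes "finite_measure M" "Y \<in> borel_measurable M" "X \<in> measurable M (count_space UNIV)"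
    and "\<forall>\<omega>\<in>space M. X \<omega> \<in> {0, 1}"
    and "\<forall>x'\<in>{0, 1}. continuous_on UNIV (cond_cdf M Y X x')"
  shows "continuous_on UNIV (marg_cdf M Y)"
proof -
  have "marg_cdf M Y = (\<lambda>t. measure M {\<omega>\<in>space M. X \<omega> = 0} * cond_cdf M Y X 0 t
                           + measure M {\<omega>\<in>space M. X \<omega> = 1} * cond_cdf M Y X 1 t)"
    using marg_cdf_binary_mixture[OF assms(1-4)] by (rule ext)
  then show ?thesis using assms(5) by (auto intro!: continuous_intros)
qed

lemma prob_binary_eq_1_minus:
  fixes X :: "'a \<Rightarrow> nat"
  assumes "prob_space M" "X \<in> measurable M (count_space UNIV)" "\<forall>\<omega>\<in>space M. X \<omega> \<in> {0, 1}"
  shows "measure M {\<omega>\<in>space M. X \<omega> = 0} = 1 - measure M {\<omega>\<in>space M. X \<omega> = 1}"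
proof -
  have "{\<omega>\<in>space M. X \<omega> = 0} = space M - {\<omega>\<in>space M. X \<omega> = 1}"
    using assms(3) by auto
  then show ?thesis using assms(1,2) by (simp add: prob_space.prob_compl)
qed

lemma measure_distr_atMost_eq_marg_cdf:
  assumes "Y \<in> borel_measurable M"
  shows "measure (distr M borel Y) {..t} = marg_cdf M Y t"
proof -
  have "Y -` {..t} \<inter> space M = {\<omega>\<in>space M. Y \<omega> \<le> t}" by auto
  then show ?thesis using assms by (simp add: measure_distr marg_cdf_def)
qed

lemma measure_distr_Ioc_marg_cdf:
  assumes "finite_measure M" "Y \<in> borel_measurable M" "a \<le> b"
  shows "measure (distr M borel Y) {a<..b} = marg_cdf M Y b - marg_cdf M Y a"
proof -
  have "Y -` {a<..b} \<inter> space M = {\<omega>\<in>space M. Y \<omega> \<le> b} - {\<omega>\<in>space M. Y \<omega> \<le> a}"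
    by auto
  moreover have "{\<omega>\<in>space M. Y \<omega> \<le> a} \<subseteq> {\<omega>\<in>space M. Y \<omega> \<le> b}"
    using assms(3) by auto
  ultimately show ?thesis using assms(1,2)
    by (simp add: measure_distr marg_cdf_def finite_measure.finite_measure_Diff)
qed

lemma marg_cdf_mono:
  assumes "finite_measure M" "Y \<in> borel_measurable M"
  shows "mono (marg_cdf M Y)"
  using assms unfolding marg_cdf_def
  by (intro monoI finite_measure.finite_measure_mono) auto

lemma exists_balance_point:
  fixes F :: "real \<Rightarrow> real"
  assumes "continuous_on {c..d} F" "mono_on {c..d} F" "c < d" "0 < q" "q < 1"
  shows "\<exists>m. c < m \<and> m < d \<and> F m - F c = q * (F d - F c)"
proof (cases "F c = F d")
  case True
  define m where "m = (c + d) / 2"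
  have "F c \<le> F m" "F m \<le> F d"
    using assms(2,3) unfolding m_def by (auto intro: mono_onD)
  then show ?thesis using True assms(3) by (intro exI[of _ m]) (auto simp: m_def)
next
  case False
  then have "F c < F d" using mono_onD[OF assms(2), of c d] assms(3) by auto
  define g where "g x = F x - F c - q * (F d - F c)" for x
  have "g c < 0" using \<open>F c < F d\<close> assms(4) unfolding g_def by simp
  moreover have "0 < g d" using \<open>F c < F d\<close> assms(5) unfolding g_def
    by (simp add: left_diff_distrib'[symmetric])
  moreover have "continuous_on {c..d} g" unfolding g_def using assms(1)
    by (intro continuous_intros)
  ultimately obtain m where "c \<le> m" "m \<le> d" "g m = 0"
    using IVT'[of g c 0 d] assms(3) by auto
  with \<open>g c < 0\<close> \<open>0 < g d\<close> show ?thesis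
    by (intro exI[of _ m]) (auto simp: g_def order.order_iff_strict)
qed

lemma exists_balanced_split:
  assumes "finite_measure M" "Y \<in> borel_measurable M" "continuous_on UNIV (marg_cdf M Y)"
    and "c < d" "0 < q" "q < 1"
  shows "\<exists>m. c < m \<and> m < d
           \<and> measure (distr M borel Y) {c<..m} = q * measure (distr M borel Y) {c<..d}"
proof -
  obtain m where "c < m" "m < d"
    "marg_cdf M Y m - marg_cdf M Y c = q * (marg_cdf M Y d - marg_cdf M Y c)"
    using exists_balance_point[of c d "marg_cdf M Y" q] marg_cdf_mono[OF assms(1,2)] assms(3-6)
    by (auto intro: continuous_on_subset mono_on_subset)
  then show ?thesis
    using measure_distr_Ioc_marg_cdf[OF assms(1,2)] by (intro exI[of _ m]) simp
qed

definition balanced_pscore :: "real \<Rightarrow> real \<Rightarrow> real \<Rightarrow> real \<Rightarrow> real \<Rightarrow> real" where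
  "balanced_pscore q c m d y = q + (1 - q) * indicator {c<..m} y - q * indicator {m<..d} y"

lemma balanced_pscore_eq_1: "y \<in> {c<..m} \<Longrightarrow> balanced_pscore q c m d y = 1"
  by (simp add: balanced_pscore_def)

lemma balanced_pscore_eq_0: "y \<in> {m<..d} \<Longrightarrow> balanced_pscore q c m d y = 0"
  by (simp add: balanced_pscore_def)

lemma balanced_pscore_bounds:
  assumes "0 \<le> q" "q \<le> 1"
  shows "0 \<le> balanced_pscore q c m d y" "balanced_pscore q c m d y \<le> 1"
  using assms by (auto simp: balanced_pscore_def indicator_def)

lemma borel_measurable_balanced_pscore [measurable]:
  "balanced_pscore q c m d \<in> borel_measurable borel"
  unfolding balanced_pscore_def by measurable

lemma has_bochner_integral_balanced_pscore_indicator: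
  fixes N :: "real measure"
  assumes "finite_measure N" "sets N = sets borel" "A \<in> sets borel" "c \<le> m" "m \<le> d"
    and balance: "measure N {c<..m} = q * measure N {c<..d}"
    and "{c<..d} \<subseteq> A \<or> {c<..d} \<inter> A = {}"
  shows "has_bochner_integral N (\<lambda>y. balanced_pscore q c m d y * indicator A y) (q * measure N A)"
proof -
  interpret finite_measure N by fact
  have indicator: "has_bochner_integral N (indicator B) (measure N B)" if "B \<in> sets borel" for B
    using that assms(2)
    by (intro has_bochner_integral_real_indicator) (auto simp: less_top[symmetric])
  from assms(7) show ?thesis
  proof
    assume sub: "{c<..d} \<subseteq> A"
    have pointwise: "balanced_pscore q c m d y * indicator A y
        = q * indicator A y + ((1 - q) * indicator {c<..m} y - q * indicator {m<..d} y)" for y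
    proof (cases "y \<in> A")
      case False
      then have "y \<notin> {c<..d}" using sub by blast
      then have "y \<notin> {c<..m}" "y \<notin> {m<..d}" using assms(4,5) by auto
      then show ?thesis using False by (simp add: balanced_pscore_def)
    qed (simp add: balanced_pscore_def)
    have "has_bochner_integral N (\<lambda>y. balanced_pscore q c m d y * indicator A y)
        (q * measure N A + ((1 - q) * measure N {c<..m} - q * measure N {m<..d}))"
      unfolding pointwise
      using indicator[OF assms(3)] indicator[of "{c<..m}"] indicator[of "{m<..d}"]
      by (intro has_bochner_integral_add has_bochner_integral_diff has_bochner_integral_mult_right)
        simp_all
    moreover have "measure N {c<..d} = measure N {c<..m} + measure N {m<..d}"
    proof -
      have "{c<..d} = {c<..m} \<union> {m<..d}" using assms(4,5) by auto
      then show ?thesis using assms(2) by (simp only:) (intro finite_measure_Union, auto)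
    qed
    then have "(1 - q) * measure N {c<..m} - q * measure N {m<..d} = 0"
      using balance by algebra
    ultimately show ?thesis by simp
  next
    assume disj: "{c<..d} \<inter> A = {}"
    have pointwise: "balanced_pscore q c m d y * indicator A y = q * indicator A y" for y
    proof (cases "y \<in> A")
      case True
      then have "y \<notin> {c<..d}" using disj by blast
      then have "y \<notin> {c<..m}" "y \<notin> {m<..d}" using assms(4,5) by auto
      then show ?thesis by (simp add: balanced_pscore_def)
    qed simp
    show ?thesis
      unfolding pointwise using indicator[OF assms(3)] by (rule has_bochner_integral_mult_right)
  qed
qed

lemma is_latent_pscore_balanced_pscore:
  assumes "prob_space M" "Y \<in> borel_measurable M" "c \<le> m" "m \<le> d" "0 \<le> q" "q \<le> 1"
    and "measure (distr M borel Y) {c<..m} = q * measure (distr M borel Y) {c<..d}"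
  shows "is_latent_pscore M Y q (balanced_pscore q c m d)"
proof -
  interpret N: prob_space "distr M borel Y"
    using assms(1,2) by (simp add: prob_space.prob_space_distr)
  have "has_bochner_integral (distr M borel Y)
      (\<lambda>y. balanced_pscore q c m d y * indicator UNIV y) (q * measure (distr M borel Y) UNIV)"
    using assms(3-7) by (intro has_bochner_integral_balanced_pscore_indicator) auto
  then have "(\<integral>y. balanced_pscore q c m d y \<partial>distr M borel Y) = q"
    using N.prob_space by (simp add: has_bochner_integral_integral_eq)
  then have "(\<integral>\<omega>. balanced_pscore q c m d (Y \<omega>) \<partial>M) = q"
    using assms(2) by (simp add: integral_distr)
  then show ?thesis
    using assms(5,6) balanced_pscore_bounds unfolding is_latent_pscore_def by auto
qed

lemma latent_cdfs_balanced_pscore: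
  assumes "prob_space M" "Y \<in> borel_measurable M" "c \<le> m" "m \<le> d" "0 < q" "q < 1"
    and balance: "measure (distr M borel Y) {c<..m} = q * measure (distr M borel Y) {c<..d}"
    and "\<tau> \<notin> {c<..<d}"
  shows "latent_cdf1 M Y (balanced_pscore q c m d) q \<tau> = marg_cdf M Y \<tau>"
    and "latent_cdf0 M Y (balanced_pscore q c m d) q \<tau> = marg_cdf M Y \<tau>"
proof -
  let ?N = "distr M borel Y" and ?p = "balanced_pscore q c m d" and ?F = "marg_cdf M Y \<tau>"
  interpret N: prob_space ?N
    using assms(1,2) by (simp add: prob_space.prob_space_distr)
  have "{c<..d} \<subseteq> {..\<tau>} \<or> {c<..d} \<inter> {..\<tau>} = {}"
    using assms(8) by (cases "\<tau> \<le> c") auto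
  then have p_part: "has_bochner_integral ?N (\<lambda>y. ?p y * indicator {..\<tau>} y) (q * ?F)"
    using has_bochner_integral_balanced_pscore_indicator[where A = "{..\<tau>}",
        OF N.finite_measure_axioms _ _ assms(3,4) balance]
      measure_distr_atMost_eq_marg_cdf[OF assms(2)]
    by simp
  have "has_bochner_integral ?N (indicator {..\<tau>}) (measure ?N {..\<tau>})"
    by (intro has_bochner_integral_real_indicator) (auto simp: less_top[symmetric])
  from has_bochner_integral_diff[OF this p_part]
  have one_minus_p_part:
    "has_bochner_integral ?N (\<lambda>y. (1 - ?p y) * indicator {..\<tau>} y) ((1 - q) * ?F)"
    unfolding measure_distr_atMost_eq_marg_cdf[OF assms(2)] by (simp add: left_diff_distrib)
  have transfer: "(\<integral>\<omega>. f (Y \<omega>) \<partial>M) = integral\<^sup>L ?N f"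
    if "f \<in> borel_measurable borel" for f :: "real \<Rightarrow> real"
    using integral_distr[OF assms(2) that] by simp
  have "(\<integral>\<omega>. ?p (Y \<omega>) * indicator {..\<tau>} (Y \<omega>) \<partial>M) = q * ?F"
    using transfer[of "\<lambda>y. ?p y * indicator {..\<tau>} y"] has_bochner_integral_integral_eq[OF p_part]
    by simp
  moreover have "(\<integral>\<omega>. (1 - ?p (Y \<omega>)) * indicator {..\<tau>} (Y \<omega>) \<partial>M) = (1 - q) * ?F"
    using transfer[of "\<lambda>y. (1 - ?p y) * indicator {..\<tau>} y"]
      has_bochner_integral_integral_eq[OF one_minus_p_part]
    by simp
  ultimately show "latent_cdf1 M Y ?p q \<tau> = ?F" and "latent_cdf0 M Y ?p q \<tau> = ?F"
    using assms(5,6) unfolding latent_cdf1_def latent_cdf0_def by simp_all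
qed

lemma emeasure_lborel_pos_if_Ioo_subset:
  fixes S :: "real set"
  assumes "a < b" "{a<..<b} \<subseteq> S" "S \<in> sets borel"
  shows "0 < emeasure lborel S"
proof -
  have "0 < emeasure lborel {a<..<b}" using assms(1) by simp
  also have "\<dots> \<le> emeasure lborel S" using assms(2,3) by (intro emeasure_mono) auto
  finally show ?thesis .
qed

lemma emeasure_balanced_pscore_eq_1_pos:
  assumes "c < m" "{c<..<m} \<subseteq> S" "S \<in> sets borel"
  shows "0 < emeasure lborel {y\<in>S. balanced_pscore q c m d y = 1}"
  using assms(2,3)
  by (intro emeasure_lborel_pos_if_Ioo_subset[OF assms(1)]) (auto simp: balanced_pscore_eq_1)

lemma emeasure_balanced_pscore_eq_0_pos:
  assumes "m < d" "{m<..<d} \<subseteq> S" "S \<in> sets borel"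
  shows "0 < emeasure lborel {y\<in>S. balanced_pscore q c m d y = 0}"
  using assms(2,3)
  by (intro emeasure_lborel_pos_if_Ioo_subset[OF assms(1)]) (auto simp: balanced_pscore_eq_0)

lemma supp_set_borel [measurable]: "supp_set M Y \<in> sets borel"
  unfolding supp_set_def by measurable

theorem corollary3:
  fixes M :: "'a measure" and Y :: "'a \<Rightarrow> real" and X :: "'a \<Rightarrow> nat" and T :: "real set"
  assumes "prob_space M"
    and "Y \<in> borel_measurable M"
    and "X \<in> measurable M (count_space UNIV)"
    and "\<forall>\<omega>\<in>space M. X \<omega> \<in> {0, 1}"
    and "measure M {\<omega>\<in>space M. X \<omega> = 0} > 0"
    and "measure M {\<omega>\<in>space M. X \<omega> = 1} > 0"
    and "\<forall>x'\<in>{0, 1}. continuous_on UNIV (cond_cdf M Y X x')"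
    and "\<forall>x'\<in>{0, 1}. strict_mono_on (supp_set M Y) (cond_cdf M Y X x')"
    and "supp_lo M Y < supp_hi M Y"
    and "\<exists>c d. c < d \<and> {c<..<d} \<subseteq> supp_set M Y - T"
  shows "\<exists>p. is_latent_pscore M Y (measure M {\<omega>\<in>space M. X \<omega> = 1}) p
           \<and> latent_T_indep M Y (measure M {\<omega>\<in>space M. X \<omega> = 1}) p T
           \<and> emeasure lborel {y\<in>supp_set M Y. p y = 0} > 0
           \<and> emeasure lborel {y\<in>supp_set M Y. p y = 1} > 0"
proof -
  interpret prob_space M by fact
  define q where "q = measure M {\<omega>\<in>space M. X \<omega> = 1}"
  have q: "0 < q" "q < 1"
    using assms(5,6) prob_binary_eq_1_minus[OF assms(1,3,4)] unfolding q_def by auto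
  obtain c d where cd: "c < d" "{c<..<d} \<subseteq> supp_set M Y - T"
    using assms(10) by blast
  obtain m where m: "c < m" "m < d"
    and balance: "measure (distr M borel Y) {c<..m} = q * measure (distr M borel Y) {c<..d}"
    using exists_balanced_split[OF finite_measure_axioms assms(2)
        continuous_marg_cdf_binary[OF finite_measure_axioms assms(2-4,7)] cd(1) q]
    by blast
  let ?p = "balanced_pscore q c m d"
  have "{c<..<m} \<subseteq> {c<..<d}" "{m<..<d} \<subseteq> {c<..<d}"
    using m by auto
  then have supp: "{c<..<m} \<subseteq> supp_set M Y" "{m<..<d} \<subseteq> supp_set M Y"
    using cd(2) by blast+
  have outside: "\<tau> \<notin> {c<..<d}" if "\<tau> \<in> T" for \<tau>
    using cd(2) that by blast
  show ?thesis
    unfolding q_def[symmetric]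
  proof (intro exI[of _ ?p] conjI)
    show "is_latent_pscore M Y q ?p"
      using is_latent_pscore_balanced_pscore[OF assms(1,2) _ _ _ _ balance] m q by simp
    show "latent_T_indep M Y q ?p T"
      unfolding latent_T_indep_def
      using latent_cdfs_balanced_pscore[OF assms(1,2) _ _ q balance outside] m by simp
    show "0 < emeasure lborel {y\<in>supp_set M Y. ?p y = 0}"
      using emeasure_balanced_pscore_eq_0_pos[OF m(2) supp(2)] by simp
    show "0 < emeasure lborel {y\<in>supp_set M Y. ?p y = 1}"
      using emeasure_balanced_pscore_eq_1_pos[OF m(1) supp(1)] by simp
  qed
qed

end
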